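(* Let $\lambda_*\in\mathbb C\setminus\{a_1,\dots,a_n\}$. If $(X,P),(\tilde X,\tilde P)\in T^*V_{n,r}$ and a symmetric $r\times r$ matrix $\Gamma=\Gamma(\lambda_* )$ satisfy the discrete Neumann equations $$P=A^{1/2}(\lambda_* )\tilde X-X\Gamma,\qquad \tilde P=-A^{1/2}(\lambda_* )X+\tilde X\Gamma,\qquad \Gamma=\tfrac12\big(\tilde X^TA^{1/2}(\lambda_* )X+X^TA^{1/2}(\lambda_* )\tilde X\big),$$ then for all $\lambda$ the intertwining relation $$\tilde L(\lambda)M(\lambda,\lambda_* )=M(\lambda,\lambda_* )L(\lambda),\qquad M(\lambda,\lambda_* )=\begin{pmatrix}-\Gamma&\mathbf I_r\\ (\lambda-\lambda_* )\mathbf I_r+\Gamma^2&-\Gamma\end{pmatrix}$$ holds. Conversely, up to the action of the group $\mathbb Z_2^n$ of reflections, the intertwining relation implies the discrete Neumann equations: if $(X,P),(\tilde X,\tilde P)\in T^*V_{n,r}$ and a symmetric $\Gamma$ satisfy the intertwining relation for all $\lambda$, then, after applying a suitable element of $\mathbb Z_2^n$ to $(\tilde X,\tilde P)$, the discrete Neumann equations hold.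
   Context: $A=\mathrm{diag}(a_1,\dots,a_n)$ with distinct $a_i$, $A(\lambda)=\lambda\mathbf I_n-A$, and $A^{1/2}(\lambda_* )=\mathrm{diag}(\sqrt{\lambda_*-a_1},\dots,\sqrt{\lambda_*-a_n})$ for a fixed choice of square roots. $T^*V_{n,r}$ is the set of pairs of $n\times r$ matrices $(X,P)$ with $X^TX=\mathbf I_r$, $X^TP+P^TX=0$. $L(\lambda)=\begin{pmatrix} X^TA(\lambda)^{-1}P & X^TA(\lambda)^{-1}X\\ \mathbf I_r-P^TA(\lambda)^{-1}P & -P^TA(\lambda)^{-1}X\end{pmatrix}$ and $\tilde L(\lambda)$ is the same expression in $(\tilde X,\tilde P)$. The group $\mathbb Z_2^n$ acts by changing the sign of the $i$-th row of both matrices of a pair simultaneously, $i=1,\dots,n$. *)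

theory Defs
  imports "HOL-Analysis.Analysis"
begin

definition diagm :: "('n::finite \<Rightarrow> complex) \<Rightarrow> complex^'n^'n" where
  "diagm d = (\<chi> i j. if i = j then d i else 0)"

definition Amat :: "('n::finite \<Rightarrow> complex) \<Rightarrow> complex \<Rightarrow> complex^'n^'n" where
  "Amat a lam = mat lam - diagm a"

text \<open>2r x 2r block matrix (B11 B12; B21 B22), indices Inl = first block, Inr = second.\<close>
definition blk :: "complex^'r^'r \<Rightarrow> complex^'r^'r \<Rightarrow> complex^'r^'r \<Rightarrow> complex^'r^'r
    \<Rightarrow> complex^('r + 'r)^('r + 'r)" where
  "blk B11 B12 B21 B22 = (\<chi> i j. case i of
      Inl i' \<Rightarrow> (case j of Inl j' \<Rightarrow> B11 $ i' $ j' | Inr j' \<Rightarrow> B12 $ i' $ j')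
    | Inr i' \<Rightarrow> (case j of Inl j' \<Rightarrow> B21 $ i' $ j' | Inr j' \<Rightarrow> B22 $ i' $ j'))"

definition in_TVnr :: "complex^'r^'n \<Rightarrow> complex^'r^'n \<Rightarrow> bool" where
  "in_TVnr X P \<longleftrightarrow> transpose X ** X = mat 1 \<and> transpose X ** P + transpose P ** X = 0"

definition Lax :: "('n::finite \<Rightarrow> complex) \<Rightarrow> complex^'r^'n \<Rightarrow> complex^'r^'n \<Rightarrow> complex
    \<Rightarrow> complex^('r::finite + 'r)^('r + 'r)" where
  "Lax a X P lam = (let R = matrix_inv (Amat a lam) in
     blk (transpose X ** R ** P) (transpose X ** R ** X)
         (mat 1 - transpose P ** R ** P) (- (transpose P ** R ** X)))"

definition Mmat :: "complex^'r^'r \<Rightarrow> complex \<Rightarrow> complex \<Rightarrow> complex^('r::finite + 'r)^('r + 'r)" where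
  "Mmat \<Gamma> lam lams = blk (- \<Gamma>) (mat 1) (mat (lam - lams) + \<Gamma> ** \<Gamma>) (- \<Gamma>)"

text \<open>Discrete Neumann equations, with A^{1/2}(lambda_*) = diagm s.\<close>
definition neumann :: "('n::finite \<Rightarrow> complex) \<Rightarrow> complex^'r^'n \<Rightarrow> complex^'r^'n
    \<Rightarrow> complex^'r^'n \<Rightarrow> complex^'r^'n \<Rightarrow> complex^'r^'r \<Rightarrow> bool" where
  "neumann s X P Xt Pt \<Gamma> \<longleftrightarrow>
     P = diagm s ** Xt - X ** \<Gamma> \<and>
     Pt = - (diagm s ** X) + Xt ** \<Gamma> \<and>
     \<Gamma> = mat (1/2 :: complex) ** (transpose Xt ** diagm s ** X + transpose X ** diagm s ** Xt)"

end

theory Submission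
  imports Defs
begin

text \<open>
  Because A(\<lambda>) is diagonal, L(\<lambda>) = J + \<Sum>_i N_i / (\<lambda> - a_i) with J = (0 0; I 0), where the
  residue N_i is made of outer products of the i-th rows x_i, p_i of X and P. Since
  M(\<lambda>, \<lambda>*) = M(a_i, \<lambda>*) + (\<lambda> - a_i) J, the commutator L~(\<lambda>) M - M L(\<lambda>) equals
  \<Sum>_i R_i / (\<lambda> - a_i) plus the constant (X~^T X~ - I, 0; -(P~^T X~ + X^T P), I - X^T X),
  where R_i = N~_i M(a_i) - M(a_i) N_i. As the poles a_i are distinct, the intertwining relation
  forces every R_i to vanish; conversely the Neumann equations make both the residues and the
  constant vanish.

  With w = \<Gamma> x_i + p_i and w~ = p~_i - \<Gamma> x~_i, the blocks of R_i = 0 amount to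
  w \<otimes> w = s_i^2 x~_i \<otimes> x~_i, w~ \<otimes> w~ = s_i^2 x_i \<otimes> x_i and x~_i \<otimes> w~ = - w \<otimes> x_i, whose
  solutions are exactly w = \<epsilon>_i s_i x~_i, w~ = - \<epsilon>_i s_i x_i with \<epsilon>_i = \<plusminus>1: the first two
  Neumann equations, row by row, up to the reflection \<epsilon>. The third Neumann equation follows
  from the first one and X^T P + P^T X = 0.
\<close>

lemma partial_fractions_residue_eq_0:
  fixes a r :: "'n::finite \<Rightarrow> 'a::real_normed_field"
  assumes inj: "inj a"
    and vanish: "\<And>z. z \<notin> range a \<Longrightarrow> (\<Sum>i\<in>UNIV. r i / (z - a i)) + c = 0"
  shows "r j = 0"
proof -
  \<comment> \<open>(z - a j) times the left-hand side, with the pole at a j cancelled\<close>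
  define h where "h z = r j + (z - a j) * ((\<Sum>i\<in>UNIV-{j}. r i / (z - a i)) + c)" for z
  have "isCont h (a j)"
    unfolding h_def using inj by (intro continuous_intros) (auto dest: injD)
  then have "(h \<longlongrightarrow> h (a j)) (at (a j))"
    by (simp add: isCont_def)
  moreover have "\<forall>\<^sub>F z in at (a j). h z = 0"
  proof -
    have "\<forall>\<^sub>F z in at (a j). \<forall>i. z \<noteq> a i"
      by (intro eventually_all_finite) (simp add: eventually_neq_at_within)
    then show ?thesis
    proof (rule eventually_mono)
      fix z assume z: "\<forall>i. z \<noteq> a i"
      have "(z - a j) * (r j / (z - a j)) = r j"
        using z by simp
      moreover have "(z - a j) * ((\<Sum>i\<in>UNIV. r i / (z - a i)) + c) = 0"
        using vanish z by auto
      ultimately show "h z = 0"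
        by (simp add: h_def sum.remove[of UNIV j] distrib_left add.assoc)
    qed
  qed
  then have "(h \<longlongrightarrow> 0) (at (a j))"
    by (rule tendsto_eventually)
  ultimately have "h (a j) = 0"
    by (rule tendsto_unique[rotated]) simp
  then show ?thesis
    by (simp add: h_def)
qed

lemma matrix_add_rdistrib: "(A + B) ** C = A ** C + B ** (C :: 'a::semiring_1^_^_)"
  by (simp add: vec_eq_iff matrix_matrix_mult_def sum.distrib distrib_right)

lemma matrix_diff_ldistrib: "A ** (B - C) = A ** B - A ** (C :: 'a::ring_1^_^_)"
  by (simp add: vec_eq_iff matrix_matrix_mult_def sum_subtractf right_diff_distrib)

lemma matrix_diff_rdistrib: "(A - B) ** C = A ** C - B ** (C :: 'a::ring_1^_^_)"
  by (simp add: vec_eq_iff matrix_matrix_mult_def sum_subtractf left_diff_distrib)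

lemma matrix_neg_left: "(- A) ** B = - (A ** (B :: 'a::ring_1^_^_))"
  by (simp add: vec_eq_iff matrix_matrix_mult_def sum_negf)

lemma matrix_neg_right: "A ** (- B) = - (A ** (B :: 'a::ring_1^_^_))"
  by (simp add: vec_eq_iff matrix_matrix_mult_def sum_negf)

lemma matrix_sum_left: "(\<Sum>i\<in>S. A i) ** B = (\<Sum>i\<in>S. A i ** (B :: 'a::semiring_1^_^_))"
  by (induction S rule: infinite_finite_induct) (simp_all add: matrix_add_rdistrib)

lemma matrix_sum_right: "B ** (\<Sum>i\<in>S. A i) = (\<Sum>i\<in>S. (B :: 'a::semiring_1^_^_) ** A i)"
  by (induction S rule: infinite_finite_induct) (simp_all add: matrix_add_ldistrib)

lemma transpose_diff: "transpose (A - B) = transpose A - transpose B"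
  by (simp add: vec_eq_iff transpose_def)

lemma matrix_inv_eqI:
  fixes A :: "'a::semiring_1^'n^'m"
  assumes "A ** B = mat 1" and "B ** A = mat 1"
  shows "matrix_inv A = B"
proof -
  have "A ** matrix_inv A = mat 1 \<and> matrix_inv A ** A = mat 1"
    unfolding matrix_inv_def by (rule someI[of _ B]) (use assms in blast)
  then have inv: "A ** matrix_inv A = mat 1" ..
  have "matrix_inv A = (B ** A) ** matrix_inv A"
    using assms(2) by simp
  also have "\<dots> = B"
    by (simp flip: matrix_mul_assoc add: inv)
  finally show ?thesis .
qed

lemma diagm_mult_row: "(diagm d ** Y) $ i = d i *s Y $ i"
  by (simp add: vec_eq_iff matrix_matrix_mult_def diagm_def if_distrib if_distribR sum.delta cong: if_cong)

lemma diagm_mult_diagm: "diagm d ** diagm e = diagm (\<lambda>i. d i * e i)"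
  by (simp add: vec_eq_iff diagm_mult_row) (simp add: diagm_def)

lemma transpose_diagm: "transpose (diagm d) = diagm d"
  by (simp add: vec_eq_iff transpose_def diagm_def)

lemma symmetric_mult_row:
  fixes G :: "'a::comm_semiring_1^'n^'n"
  assumes "transpose G = G"
  shows "(X ** G) $ i = G *v X $ i"
proof -
  have sym: "G $ k $ l = G $ l $ k" for k l
    using arg_cong[OF assms, of "\<lambda>M. M $ l $ k"] by (simp add: transpose_def)
  have "X $ i $ k * G $ k $ l = G $ l $ k * X $ i $ k" for k l
    by (simp add: sym[of k l] mult.commute)
  then show ?thesis
    by (simp add: vec_eq_iff matrix_matrix_mult_def matrix_vector_mult_def)
qed

definition smult_mat :: "'a::times \<Rightarrow> 'a^'m^'n \<Rightarrow> 'a^'m^'n" where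
  "smult_mat c A = (\<chi> i j. c * A$i$j)"

lemma smult_mat_nth [simp]: "smult_mat c A $ i $ j = c * A $ i $ j"
  by (simp add: smult_mat_def)

lemma smult_mat_mult_left: "smult_mat c A ** B = smult_mat c (A ** (B :: 'a::comm_semiring_1^_^_))"
  by (simp add: vec_eq_iff matrix_matrix_mult_def sum_distrib_left mult_ac)

lemma smult_mat_mult_right: "A ** smult_mat c B = smult_mat c (A ** (B :: 'a::comm_semiring_1^_^_))"
  by (simp add: vec_eq_iff matrix_matrix_mult_def sum_distrib_left mult_ac)

lemma smult_mat_add: "smult_mat c (A + B) = smult_mat c A + smult_mat c (B :: 'a::semiring^_^_)"
  by (simp add: vec_eq_iff distrib_left)

lemma smult_mat_zero [simp]: "smult_mat c (0 :: 'a::mult_zero^_^_) = 0"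
  by (simp add: vec_eq_iff)

lemma smult_mat_minus: "smult_mat c (- A) = - smult_mat c (A :: 'a::ring^_^_)"
  by (simp add: vec_eq_iff)

lemma smult_mat_diff: "smult_mat c (A - B) = smult_mat c A - smult_mat c (B :: 'a::ring^_^_)"
  by (simp add: vec_eq_iff right_diff_distrib)

lemma smult_mat_smult_mat: "smult_mat c (smult_mat d A) = smult_mat (c * d) (A :: 'a::semigroup_mult^_^_)"
  by (simp add: vec_eq_iff mult.assoc)

lemma smult_mat_1 [simp]: "smult_mat 1 (A :: 'a::monoid_mult^_^_) = A"
  by (simp add: vec_eq_iff)

lemma mat_mult_left: "mat c ** A = smult_mat c (A :: 'a::semiring_1^_^_)"
  by (simp add: vec_eq_iff matrix_matrix_mult_def mat_def if_distrib if_distribR sum.delta cong: if_cong)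

definition outer :: "'a::times^'m \<Rightarrow> 'a^'n \<Rightarrow> 'a^'n^'m" where
  "outer u v = (\<chi> k l. u$k * v$l)"

lemma outer_nth [simp]: "outer u v $ k $ l = u$k * v$l"
  by (simp add: outer_def)

lemma outer_add_left: "outer (u + u') v = outer u v + outer u' (v :: 'a::semiring^_)"
  by (simp add: vec_eq_iff distrib_right)

lemma outer_add_right: "outer u (v + v') = outer u v + outer u (v' :: 'a::semiring^_)"
  by (simp add: vec_eq_iff distrib_left)

lemma outer_diff_left: "outer (u - u') v = outer u v - outer u' (v :: 'a::ring^_)"
  by (simp add: vec_eq_iff left_diff_distrib)

lemma outer_diff_right: "outer u (v - v') = outer u v - outer u (v' :: 'a::ring^_)"
  by (simp add: vec_eq_iff right_diff_distrib)

lemma outer_minus_left: "outer (- u) v = - outer u (v :: 'a::ring^_)"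
  by (simp add: vec_eq_iff)

lemma matrix_vector_mult_neg_left: "(- A) *v x = - (A *v (x :: 'a::ring_1^_))"
  by (simp add: vec_eq_iff matrix_vector_mult_def sum_negf)

lemma matrix_vector_mult_smult: "A *v (c *s x) = c *s (A *v (x :: 'a::comm_semiring_1^_))"
  by (simp add: vec_eq_iff matrix_vector_mult_def sum_distrib_left mult_ac)

lemma matrix_vector_mult_neg_right: "A *v (- x) = - (A *v (x :: 'a::ring_1^_))"
  by (simp add: vec_eq_iff matrix_vector_mult_def sum_negf)

lemma mat_mult_vector: "mat c *v x = c *s (x :: 'a::semiring_1^_)"
  by (simp add: vec_eq_iff matrix_vector_mult_def mat_def if_distrib if_distribR sum.delta cong: if_cong)

lemma outer_mult_right: "outer u v ** B = outer u (transpose B *v (v :: 'a::comm_semiring_1^_))"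
  by (simp add: vec_eq_iff matrix_matrix_mult_def transpose_def matrix_vector_mult_def sum_distrib_left mult_ac)

lemma mult_outer_left: "B ** outer u v = outer (B *v u) (v :: 'a::comm_semiring_1^_)"
  by (simp add: vec_eq_iff matrix_matrix_mult_def matrix_vector_mult_def sum_distrib_left mult_ac)

lemma sum_outer_rows: "(\<Sum>i\<in>UNIV. outer (X $ i) (Y $ i)) = transpose X ** (Y :: 'a::comm_semiring_1^_^_)"
  by (simp add: vec_eq_iff matrix_matrix_mult_def transpose_def sum_component)

lemma outer_eq_0_iff: "outer u v = 0 \<longleftrightarrow> u = 0 \<or> v = (0 :: 'a::semiring_no_zero_divisors^_)"
  by (auto simp: vec_eq_iff)

lemma outer_self_eq_iff: "outer x x = outer y y \<longleftrightarrow> x = y \<or> x = - (y :: 'a::idom^_)"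
proof
  assume eq: "outer x x = outer y y"
  have xy: "x$k * x$l = y$k * y$l" for k l
    using arg_cong[OF eq, of "\<lambda>M. M $ k $ l"] by simp
  show "x = y \<or> x = - y"
  proof (cases "y = 0")
    case True
    then have "x$k * x$k = 0" for k
      using xy[of k k] by simp
    then show ?thesis
      using True by (simp add: vec_eq_iff)
  next
    case False
    then obtain j where yj: "y$j \<noteq> 0"
      by (auto simp: vec_eq_iff)
    have "(x$j - y$j) * (x$j + y$j) = 0"
      using xy[of j j] by (simp add: algebra_simps)
    then obtain e where e: "e = 1 \<or> e = -1" and "x$j = e * y$j"
      by (metis add_eq_0_iff2 eq_iff_diff_eq_0 mult_eq_0_iff mult_1 mult_minus1)
    then have "y$j * (e * x$k - y$k) = 0" for k
      using xy[of j k] by (simp add: algebra_simps)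
    then have "e * x$k = y$k" for k
      using yj by simp
    then have "y = e *s x"
      by (simp add: vec_eq_iff)
    with e show ?thesis
      by (metis minus_minus vector_smult_lid vector_sneg_minus1)
  qed
qed (auto simp: vec_eq_iff)

lemma blk_nth [simp]:
  "blk A B C D $ Inl i $ Inl j = A $ i $ j"
  "blk A B C D $ Inl i $ Inr j = B $ i $ j"
  "blk A B C D $ Inr i $ Inl j = C $ i $ j"
  "blk A B C D $ Inr i $ Inr j = D $ i $ j"
  by (simp_all add: blk_def)

lemma blk_eqI:
  assumes "\<And>i j. M $ Inl i $ Inl j = A $ i $ j" "\<And>i j. M $ Inl i $ Inr j = B $ i $ j"
    and "\<And>i j. M $ Inr i $ Inl j = C $ i $ j" "\<And>i j. M $ Inr i $ Inr j = D $ i $ j"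
  shows "M = blk A B C D"
  unfolding vec_eq_iff
proof (intro allI)
  show "M $ p $ q = blk A B C D $ p $ q" for p q
    using assms by (cases p; cases q) simp_all
qed

lemma blk_eq_iff: "blk A B C D = blk A' B' C' D' \<longleftrightarrow> A = A' \<and> B = B' \<and> C = C' \<and> D = D'"
  by (metis blk_eqI blk_nth vec_eq_iff)

lemma blk_mult:
  "blk A B C D ** blk E F G H = blk (A ** E + B ** G) (A ** F + B ** H) (C ** E + D ** G) (C ** F + D ** H)"
  by (rule blk_eqI) (simp_all add: matrix_matrix_mult_def sum.Plus flip: UNIV_Plus_UNIV)

lemma blk_add: "blk A B C D + blk E F G H = blk (A + E) (B + F) (C + G) (D + H)"
  by (rule blk_eqI) simp_all

lemma blk_diff: "blk A B C D - blk E F G H = blk (A - E) (B - F) (C - G) (D - H)"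
  by (rule blk_eqI) simp_all

lemma blk_zero: "blk 0 0 0 0 = 0"
  by (rule sym, rule blk_eqI) simp_all

lemma sum_blk: "(\<Sum>i\<in>S. blk (A i) (B i) (C i) (D i)) = blk (sum A S) (sum B S) (sum C S) (sum D S)"
  by (rule blk_eqI) (simp_all add: sum_component)

lemma smult_mat_blk: "smult_mat c (blk A B C D) = blk (smult_mat c A) (smult_mat c B) (smult_mat c C) (smult_mat c D)"
  by (rule blk_eqI) simp_all

definition Lax_infinity :: "complex^('r::finite + 'r)^('r + 'r)" where
  "Lax_infinity = blk 0 0 (mat 1) 0"

definition Lax_residue :: "complex^'r \<Rightarrow> complex^'r \<Rightarrow> complex^('r::finite + 'r)^('r + 'r)" where
  "Lax_residue x p = blk (outer x p) (outer x x) (- outer p p) (- outer p x)"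

lemma Amat_inverse:
  assumes "lam \<notin> range a"
  shows "matrix_inv (Amat a lam) = diagm (\<lambda>i. 1 / (lam - a i))"
proof (rule matrix_inv_eqI)
  have A: "Amat a lam = diagm (\<lambda>i. lam - a i)"
    by (simp add: Amat_def diagm_def mat_def vec_eq_iff)
  have "lam - a i \<noteq> 0" for i
    using assms by auto
  then show "Amat a lam ** diagm (\<lambda>i. 1 / (lam - a i)) = mat 1"
    and "diagm (\<lambda>i. 1 / (lam - a i)) ** Amat a lam = mat 1"
    unfolding A diagm_mult_diagm by (simp_all add: diagm_def mat_def)
qed

lemma transpose_diagm_mult:
  "transpose X ** diagm d ** Y = (\<Sum>i\<in>UNIV. smult_mat (d i) (outer (X $ i) (Y $ i)))"
  by (simp add: vec_eq_iff matrix_matrix_mult_def transpose_def diagm_def sum_component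
      if_distrib if_distribR sum.delta cong: if_cong) (simp add: mult_ac)

lemma Lax_partial_fractions:
  assumes "lam \<notin> range a"
  shows "Lax a X P lam = Lax_infinity + (\<Sum>i\<in>UNIV. smult_mat (1 / (lam - a i)) (Lax_residue (X $ i) (P $ i)))"
  by (simp add: Lax_def Amat_inverse[OF assms] transpose_diagm_mult Lax_infinity_def Lax_residue_def
      smult_mat_blk smult_mat_minus sum_blk blk_add sum_negf)

lemma Mmat_affine: "Mmat \<Gamma> lam lams = Mmat \<Gamma> \<mu> lams + smult_mat (lam - \<mu>) Lax_infinity"
  by (simp add: Mmat_def Lax_infinity_def smult_mat_blk blk_add blk_eq_iff)
    (simp add: vec_eq_iff mat_def algebra_simps)

lemma Lax_commutator_constant_term:
  fixes X P Xt Pt :: "complex^'r::finite^'n::finite"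
  shows "(\<Sum>i\<in>UNIV. Lax_residue (Xt $ i) (Pt $ i) ** Lax_infinity - Lax_infinity ** Lax_residue (X $ i) (P $ i))
      + (Lax_infinity ** Mmat \<Gamma> lam lams - Mmat \<Gamma> lam lams ** Lax_infinity)
    = blk (transpose Xt ** Xt - mat 1) 0 (- (transpose Pt ** Xt + transpose X ** P)) (mat 1 - transpose X ** X)"
  by (simp add: Lax_residue_def Lax_infinity_def Mmat_def blk_mult blk_diff blk_add sum_blk
      matrix_neg_left sum_subtractf sum_negf sum_outer_rows)

lemma Lax_commutator:
  fixes X P Xt Pt :: "complex^'r::finite^'n::finite"
  assumes lam: "lam \<notin> range a"
  shows "Lax a Xt Pt lam ** Mmat \<Gamma> lam lams - Mmat \<Gamma> lam lams ** Lax a X P lam =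
    (\<Sum>i\<in>UNIV. smult_mat (1 / (lam - a i))
        (Lax_residue (Xt $ i) (Pt $ i) ** Mmat \<Gamma> (a i) lams - Mmat \<Gamma> (a i) lams ** Lax_residue (X $ i) (P $ i)))
    + blk (transpose Xt ** Xt - mat 1) 0 (- (transpose Pt ** Xt + transpose X ** P)) (mat 1 - transpose X ** X)"
proof -
  let ?J = "Lax_infinity :: complex^('r + 'r)^('r + 'r)"
  let ?M = "Mmat \<Gamma> lam lams"
  define N where "N i = Lax_residue (X $ i) (P $ i)" for i
  define Nt where "Nt i = Lax_residue (Xt $ i) (Pt $ i)" for i
  define R where "R i = Nt i ** Mmat \<Gamma> (a i) lams - Mmat \<Gamma> (a i) lams ** N i" for i
  have shift: "Nt i ** ?M - ?M ** N i = R i + smult_mat (lam - a i) (Nt i ** ?J - ?J ** N i)" for i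
    by (simp add: R_def Mmat_affine[of \<Gamma> lam lams "a i"] matrix_add_ldistrib matrix_add_rdistrib
        smult_mat_mult_left smult_mat_mult_right smult_mat_diff)
  have cancel: "smult_mat (1 / (lam - a i)) (smult_mat (lam - a i) B) = B" for i and B :: "complex^('r + 'r)^('r + 'r)"
    using lam by (auto simp: smult_mat_smult_mat)
  have "Lax a Xt Pt lam ** ?M - ?M ** Lax a X P lam
      = (\<Sum>i\<in>UNIV. smult_mat (1 / (lam - a i)) (Nt i ** ?M - ?M ** N i)) + (?J ** ?M - ?M ** ?J)"
    by (simp add: Lax_partial_fractions[OF lam] N_def Nt_def matrix_add_ldistrib matrix_add_rdistrib
        matrix_sum_left matrix_sum_right smult_mat_mult_left smult_mat_mult_right smult_mat_diff
        sum_subtractf algebra_simps)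
  also have "(\<Sum>i\<in>UNIV. smult_mat (1 / (lam - a i)) (Nt i ** ?M - ?M ** N i))
      = (\<Sum>i\<in>UNIV. smult_mat (1 / (lam - a i)) (R i)) + (\<Sum>i\<in>UNIV. Nt i ** ?J - ?J ** N i)"
    by (simp add: shift smult_mat_add cancel sum.distrib)
  finally show ?thesis
    unfolding add.assoc R_def N_def Nt_def Lax_commutator_constant_term .
qed

lemma Lax_residue_mult_Mmat:
  fixes xt pt :: "complex^'r::finite" and G :: "complex^'r^'r"
  assumes symm: "transpose G = G"
  shows "Lax_residue xt pt ** Mmat G \<mu> lams =
    blk (outer xt ((\<mu> - lams) *s xt - G *v (pt - G *v xt))) (outer xt (pt - G *v xt))
        (- outer pt ((\<mu> - lams) *s xt - G *v (pt - G *v xt))) (- outer pt (pt - G *v xt))"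
  by (simp add: Lax_residue_def Mmat_def blk_mult blk_eq_iff matrix_neg_left matrix_neg_right
      matrix_add_ldistrib outer_mult_right symm matrix_transpose_mul mat_mult_vector
      outer_add_right outer_diff_right matrix_vector_mul_assoc algebra_simps)

lemma Mmat_mult_Lax_residue:
  fixes x p :: "complex^'r::finite" and G :: "complex^'r^'r"
  shows "Mmat G \<mu> lams ** Lax_residue x p =
    blk (- outer (G *v x + p) p) (- outer (G *v x + p) x)
        (outer ((\<mu> - lams) *s x + G *v (G *v x + p)) p) (outer ((\<mu> - lams) *s x + G *v (G *v x + p)) x)"
  by (simp add: Lax_residue_def Mmat_def blk_mult blk_eq_iff matrix_neg_left matrix_neg_right
      matrix_add_rdistrib mult_outer_left mat_mult_vector
      outer_add_left outer_diff_left outer_minus_left matrix_vector_mul_assoc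
      matrix_vector_mult_neg_left algebra_simps)

lemma outer_self_eq_smult_iff:
  "outer w w = outer (s *s u) (s *s u) \<longleftrightarrow> (\<exists>e. (e = 1 \<or> e = -1) \<and> w = (e * s) *s (u :: 'a::idom^_))"
  by (auto simp: outer_self_eq_iff vector_sneg_minus1 vector_smult_assoc)

lemma rank_one_sign_choice:
  fixes x xt w wt :: "complex^'r::finite"
  assumes w: "outer w w = outer (s *s xt) (s *s xt)" and wt: "outer wt wt = outer (s *s x) (s *s x)"
    and cross: "outer xt wt = - outer w x" and s0: "s \<noteq> 0"
  shows "\<exists>e. (e = 1 \<or> e = -1) \<and> w = (e * s) *s xt \<and> wt = - ((e * s) *s x)"
proof -
  obtain \<sigma> where \<sigma>: "\<sigma> = 1 \<or> \<sigma> = -1" and w_eq: "w = (\<sigma> * s) *s xt"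
    using w by (auto simp: outer_self_eq_smult_iff)
  obtain \<tau> where \<tau>: "\<tau> = 1 \<or> \<tau> = -1" and wt_eq: "wt = (\<tau> * s) *s x"
    using wt by (auto simp: outer_self_eq_smult_iff)
  show ?thesis
  proof (cases "\<tau> = - \<sigma>")
    case True
    then show ?thesis
      using \<sigma> w_eq wt_eq by (intro exI[of _ \<sigma>]) simp
  next
    case False
    then have "\<tau> = \<sigma>"
      using \<sigma> \<tau> by auto
    \<comment> \<open>equal signs force xt \<otimes> x = 0, and then either sign fits\<close>
    have prod: "(2 * \<sigma> * s) * (xt $ k * x $ l) = 0" for k l
      using arg_cong[OF cross, of "\<lambda>M. M $ k $ l"] by (simp add: w_eq wt_eq \<open>\<tau> = \<sigma>\<close> algebra_simps)
    have "xt $ k * x $ l = 0" for k l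
      using prod[of k l] \<sigma> s0 by auto
    then have "outer xt x = 0"
      by (simp add: vec_eq_iff)
    then consider "xt = 0" | "x = 0"
      by (auto simp: outer_eq_0_iff)
    then show ?thesis
    proof cases
      case 1
      then show ?thesis
        using \<sigma> wt_eq \<open>\<tau> = \<sigma>\<close> w_eq by (intro exI[of _ "- \<sigma>"]) auto
    next
      case 2
      then show ?thesis
        using \<sigma> w_eq wt_eq by (intro exI[of _ \<sigma>]) auto
    qed
  qed
qed

lemma Lax_residue_intertwining_iff:
  fixes x p xt pt :: "complex^'r::finite" and G :: "complex^'r^'r"
  assumes symm: "transpose G = G" and s: "s\<^sup>2 = lams - \<mu>" and s0: "s \<noteq> 0"
  shows "Lax_residue xt pt ** Mmat G \<mu> lams = Mmat G \<mu> lams ** Lax_residue x p \<longleftrightarrow>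
    (\<exists>e. (e = 1 \<or> e = -1) \<and> G *v x + p = (e * s) *s xt \<and> pt - G *v xt = - ((e * s) *s x))"
    (is "?intertwine \<longleftrightarrow> ?rows")
proof
  define w wt c where "w = G *v x + p" and "wt = pt - G *v xt" and "c = \<mu> - lams"
  assume ?intertwine
  then have TL: "outer xt (c *s xt - G *v wt) = - outer w p"
    and TR: "outer xt wt = - outer w x"
    and BR: "- outer pt wt = outer (c *s x + G *v w) x"
    unfolding Lax_residue_mult_Mmat[OF symm] Mmat_mult_Lax_residue blk_eq_iff
      w_def[symmetric] wt_def[symmetric] c_def[symmetric]
    by simp_all
  \<comment> \<open>multiplying TR by G on either side eliminates the G-terms of TL and BR\<close>
  have TR_G: "outer xt (G *v wt) = - outer w (G *v x)"
    using arg_cong[OF TR, of "\<lambda>M. M ** G"] by (simp add: outer_mult_right symm matrix_neg_left)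
  have G_TR: "outer (G *v xt) wt = - outer (G *v w) x"
    using arg_cong[OF TR, of "\<lambda>M. G ** M"] by (simp add: mult_outer_left matrix_neg_right)
  have ww: "outer w w = outer (s *s xt) (s *s xt)"
  proof -
    have "w$k * w$l = s\<^sup>2 * (xt$k * xt$l)" for k l
    proof -
      have "xt$k * (c * xt$l - (G *v wt)$l) = - (w$k * p$l)" "xt$k * (G *v wt)$l = - (w$k * (G *v x)$l)"
        using arg_cong[OF TL, of "\<lambda>M. M$k$l"] arg_cong[OF TR_G, of "\<lambda>M. M$k$l"] by simp_all
      then show ?thesis
        unfolding s c_def w_def by simp algebra
    qed
    then show ?thesis
      by (simp add: vec_eq_iff power2_eq_square mult_ac)
  qed
  have wtwt: "outer wt wt = outer (s *s x) (s *s x)"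
  proof -
    have "wt$k * wt$l = s\<^sup>2 * (x$k * x$l)" for k l
    proof -
      have "- (pt$k * wt$l) = (c * x$k + (G *v w)$k) * x$l" "(G *v xt)$k * wt$l = - ((G *v w)$k * x$l)"
        using arg_cong[OF BR, of "\<lambda>M. M$k$l"] arg_cong[OF G_TR, of "\<lambda>M. M$k$l"] by simp_all
      then show ?thesis
        unfolding s c_def wt_def by simp algebra
    qed
    then show ?thesis
      by (simp add: vec_eq_iff power2_eq_square mult_ac)
  qed
  show ?rows
    using rank_one_sign_choice[OF ww wtwt TR s0] unfolding w_def wt_def .
next
  assume ?rows
  then obtain e where e: "e = 1 \<or> e = -1"
    and p: "p = (e * s) *s xt - G *v x" and pt: "pt = G *v xt - (e * s) *s x"
    by (auto simp: algebra_simps)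
  have es: "e * (e * (s * (s * z))) = (lams - \<mu>) * z" for z
    using e s by (auto simp: power2_eq_square)
  show ?intertwine
    unfolding Lax_residue_mult_Mmat[OF symm] Mmat_mult_Lax_residue blk_eq_iff p pt
    by (simp add: vec_eq_iff matrix_vector_mult_smult matrix_vector_mult_neg_right algebra_simps es)
qed

lemma neumann_iff_rows:
  fixes X P Y Q :: "complex^'r::finite^'n::finite"
  assumes XP: "in_TVnr X P" and symm: "transpose \<Gamma> = \<Gamma>"
  shows "neumann s X P Y Q \<Gamma> \<longleftrightarrow>
    (\<forall>i. \<Gamma> *v X $ i + P $ i = s i *s Y $ i \<and> Q $ i - \<Gamma> *v Y $ i = - (s i *s X $ i))"
proof -
  have P_rows: "P = diagm s ** Y - X ** \<Gamma> \<longleftrightarrow> (\<forall>i. \<Gamma> *v X $ i + P $ i = s i *s Y $ i)"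
    unfolding vec_eq_iff[of P] by (simp add: diagm_mult_row symmetric_mult_row[OF symm] eq_diff_eq add.commute)
  have Q_rows: "Q = - (diagm s ** X) + Y ** \<Gamma> \<longleftrightarrow> (\<forall>i. Q $ i - \<Gamma> *v Y $ i = - (s i *s X $ i))"
    unfolding vec_eq_iff[of Q] by (simp add: diagm_mult_row symmetric_mult_row[OF symm] diff_eq_eq add.commute)
  have \<Gamma>_eq: "\<Gamma> = mat (1/2) ** (transpose Y ** diagm s ** X + transpose X ** diagm s ** Y)"
    if P: "P = diagm s ** Y - X ** \<Gamma>"
  proof -
    have X1: "transpose X ** X = mat 1" and skew: "transpose X ** P + transpose P ** X = 0"
      using XP by (auto simp: in_TVnr_def)
    have "transpose X ** diagm s ** Y = transpose X ** P + \<Gamma>"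
      by (simp add: P matrix_diff_ldistrib matrix_mul_assoc X1)
    moreover have "transpose Y ** diagm s ** X = transpose P ** X + \<Gamma>"
      by (simp add: P transpose_diff matrix_transpose_mul transpose_diagm symm matrix_diff_rdistrib X1
          flip: matrix_mul_assoc)
    ultimately have "transpose Y ** diagm s ** X + transpose X ** diagm s ** Y
        = (transpose X ** P + transpose P ** X) + (\<Gamma> + \<Gamma>)"
      by (simp only: ac_simps)
    then show ?thesis
      unfolding skew
      by (simp add: mat_mult_left vec_eq_iff)
  qed
  show ?thesis
    unfolding neumann_def using P_rows Q_rows \<Gamma>_eq by blast
qed

lemma neumann_cross_term:
  fixes X P Xt Pt :: "complex^'r::finite^'n::finite"
  assumes N: "neumann s X P Xt Pt \<Gamma>" and X1: "transpose X ** X = mat 1"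
    and Xt1: "transpose Xt ** Xt = mat 1" and symm: "transpose \<Gamma> = \<Gamma>"
  shows "transpose Pt ** Xt + transpose X ** P = 0"
proof -
  have P: "P = diagm s ** Xt - X ** \<Gamma>" and Pt: "Pt = - (diagm s ** X) + Xt ** \<Gamma>"
    using N by (auto simp: neumann_def)
  have "transpose Pt ** Xt = \<Gamma> - transpose X ** diagm s ** Xt"
    by (simp add: Pt transpose_diff matrix_transpose_mul transpose_diagm symm
        matrix_diff_rdistrib Xt1 flip: matrix_mul_assoc)
  moreover have "transpose X ** P = transpose X ** diagm s ** Xt - \<Gamma>"
    by (simp add: P matrix_diff_ldistrib matrix_mul_assoc X1)
  ultimately show ?thesis
    by simp
qed

lemma intertwining_imp_residue_intertwining:
  fixes a :: "'n::finite \<Rightarrow> complex" and X P Xt Pt :: "complex^'r::finite^'n"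
  assumes inj: "inj a"
    and H: "\<forall>lam. lam \<notin> range a \<longrightarrow> Lax a Xt Pt lam ** Mmat \<Gamma> lam lams = Mmat \<Gamma> lam lams ** Lax a X P lam"
  shows "Lax_residue (Xt $ j) (Pt $ j) ** Mmat \<Gamma> (a j) lams = Mmat \<Gamma> (a j) lams ** Lax_residue (X $ j) (P $ j)"
proof -
  define R where "R i = Lax_residue (Xt $ i) (Pt $ i) ** Mmat \<Gamma> (a i) lams - Mmat \<Gamma> (a i) lams ** Lax_residue (X $ i) (P $ i)" for i
  define K :: "complex^('r + 'r)^('r + 'r)"
    where "K = blk (transpose Xt ** Xt - mat 1) 0 (- (transpose Pt ** Xt + transpose X ** P)) (mat 1 - transpose X ** X)"
  have "R j $ p $ q = 0" for p q
  proof (rule partial_fractions_residue_eq_0[OF inj])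
    fix z assume z: "z \<notin> range a"
    then have "(\<Sum>i\<in>UNIV. smult_mat (1 / (z - a i)) (R i)) + K = 0"
      using Lax_commutator[OF z, of Xt Pt \<Gamma> lams X P] H by (simp add: R_def K_def)
    then show "(\<Sum>i\<in>UNIV. R i $ p $ q / (z - a i)) + K $ p $ q = 0"
      by (simp add: vec_eq_iff sum_component)
  qed
  then show ?thesis
    by (simp add: R_def vec_eq_iff)
qed

lemma neumann_imp_intertwining:
  fixes a s :: "'n::finite \<Rightarrow> complex" and X P Xt Pt :: "complex^'r::finite^'n"
  assumes N: "neumann s X P Xt Pt \<Gamma>" and XP: "in_TVnr X P" and XPt: "in_TVnr Xt Pt"
    and symm: "transpose \<Gamma> = \<Gamma>" and sqrt: "\<And>i. (s i)\<^sup>2 = lams - a i" and s0: "\<And>i. s i \<noteq> 0"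
    and lam: "lam \<notin> range a"
  shows "Lax a Xt Pt lam ** Mmat \<Gamma> lam lams = Mmat \<Gamma> lam lams ** Lax a X P lam"
proof -
  have X1: "transpose X ** X = mat 1" and Xt1: "transpose Xt ** Xt = mat 1"
    using XP XPt by (auto simp: in_TVnr_def)
  have "Lax_residue (Xt $ i) (Pt $ i) ** Mmat \<Gamma> (a i) lams = Mmat \<Gamma> (a i) lams ** Lax_residue (X $ i) (P $ i)" for i
    using N unfolding Lax_residue_intertwining_iff[OF symm sqrt s0] neumann_iff_rows[OF XP symm]
    by (intro exI[of _ 1]) simp
  then show ?thesis
    using Lax_commutator[OF lam, of Xt Pt \<Gamma> lams X P]
    by (simp add: X1 Xt1 neumann_cross_term[OF N X1 Xt1 symm] blk_zero)
qed

lemma intertwining_imp_reflected_neumann: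
  fixes a s :: "'n::finite \<Rightarrow> complex" and X P Xt Pt :: "complex^'r::finite^'n"
  assumes inj: "inj a" and XP: "in_TVnr X P" and symm: "transpose \<Gamma> = \<Gamma>"
    and sqrt: "\<And>i. (s i)\<^sup>2 = lams - a i" and s0: "\<And>i. s i \<noteq> 0"
    and H: "\<forall>lam. lam \<notin> range a \<longrightarrow> Lax a Xt Pt lam ** Mmat \<Gamma> lam lams = Mmat \<Gamma> lam lams ** Lax a X P lam"
  shows "\<exists>\<epsilon>. (\<forall>i. \<epsilon> i = 1 \<or> \<epsilon> i = -1) \<and> neumann s X P (diagm \<epsilon> ** Xt) (diagm \<epsilon> ** Pt) \<Gamma>"
proof -
  have "\<exists>e. (e = 1 \<or> e = -1) \<and> \<Gamma> *v X $ i + P $ i = (e * s i) *s Xt $ i \<and>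
      Pt $ i - \<Gamma> *v Xt $ i = - ((e * s i) *s X $ i)" for i
    using intertwining_imp_residue_intertwining[OF inj H] Lax_residue_intertwining_iff[OF symm sqrt s0]
    by blast
  then obtain \<epsilon> where \<epsilon>: "\<And>i. (\<epsilon> i = 1 \<or> \<epsilon> i = -1) \<and> \<Gamma> *v X $ i + P $ i = (\<epsilon> i * s i) *s Xt $ i \<and>
      Pt $ i - \<Gamma> *v Xt $ i = - ((\<epsilon> i * s i) *s X $ i)"
    by metis
  have "\<Gamma> *v X $ i + P $ i = s i *s (diagm \<epsilon> ** Xt) $ i \<and>
      (diagm \<epsilon> ** Pt) $ i - \<Gamma> *v (diagm \<epsilon> ** Xt) $ i = - (s i *s X $ i)" for i
    using \<epsilon>[of i] by (auto simp: diagm_mult_row matrix_vector_mult_smult vec_eq_iff algebra_simps)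
  with \<epsilon> show ?thesis
    unfolding neumann_iff_rows[OF XP symm] by blast
qed

theorem theorem6p2:
  fixes a :: "'n::finite \<Rightarrow> complex"
    and s :: "'n \<Rightarrow> complex"
    and lams :: complex
    and X P Xt Pt :: "complex^'r::finite^'n"
    and \<Gamma> :: "complex^'r^'r"
  assumes distinct: "inj a"
    and lam_notin: "lams \<notin> range a"
    and sqrt: "\<And>i. (s i)\<^sup>2 = lams - a i"
    and XP: "in_TVnr X P" and XPt: "in_TVnr Xt Pt"
    and symm: "transpose \<Gamma> = \<Gamma>"
  shows "(neumann s X P Xt Pt \<Gamma> \<longrightarrow>
            (\<forall>lam. lam \<notin> range a \<longrightarrow> Lax a Xt Pt lam ** Mmat \<Gamma> lam lams = Mmat \<Gamma> lam lams ** Lax a X P lam))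
       \<and> ((\<forall>lam. lam \<notin> range a \<longrightarrow> Lax a Xt Pt lam ** Mmat \<Gamma> lam lams = Mmat \<Gamma> lam lams ** Lax a X P lam)
            \<longrightarrow> (\<exists>\<epsilon> :: 'n \<Rightarrow> complex. (\<forall>i. \<epsilon> i = 1 \<or> \<epsilon> i = -1) \<and>
                   neumann s X P (diagm \<epsilon> ** Xt) (diagm \<epsilon> ** Pt) \<Gamma>))"
proof -
  have s0: "s i \<noteq> 0" for i
    using sqrt[of i] lam_notin by auto
  show ?thesis
    using neumann_imp_intertwining[OF _ XP XPt symm sqrt s0]
      intertwining_imp_reflected_neumann[OF distinct XP symm sqrt s0] by simp
qed

end
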